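(* Let $n$ be a positive integer and let $x$ be a complex number such that no denominator below vanishes. Then \[ \sum_{k=0}^{n}(-1)^k\binom{n}{k}\frac{\binom{2x+k}{k}}{\binom{2x+n+k}{k}}H_{k}(x) =4^{n-1}\frac{\binom{n-\frac{1}{2}}{n}}{\binom{2x+2n}{n}}\big\{H_n(x)+H_n-2H_{2n}\big\} -\frac{4^{n-1}}{n}\frac{\binom{x+n-\frac{1}{2}}{n}}{\binom{2x+2n}{n}\binom{x+n}{n}}. \]
   Context: For complex $z$ and a nonnegative integer $k$, $\binom{z}{k}=\frac{z(z-1)\cdots(z-k+1)}{k!}$ (with $\binom{z}{0}=1$). For complex $x$ and nonnegative integer $m$, $H_0(x)=0$ and $H_m(x)=\sum_{j=1}^m\frac{1}{x+j}$; $H_m=H_m(0)=\sum_{j=1}^m\frac1j$. The parameter $x$ is assumed to be such that all denominators are nonzero. *)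

theory Defs
  imports Complex_Main
begin

definition Hx :: "complex \<Rightarrow> nat \<Rightarrow> complex" where
  "Hx x m = (\<Sum>j=1..m. 1 / (x + of_nat j))"

end

theory Submission
  imports Defs
begin

text \<open>
  Write \<open>c\<^sub>n(k)\<close> (\<open>hterm\<close>) for the summand without the harmonic factor, and
  \<open>s\<^sub>n = \<Sum>\<^sub>k c\<^sub>n(k)\<close>, \<open>W\<^sub>n = \<Sum>\<^sub>k c\<^sub>n(k) k/(x+k)\<close>, \<open>S\<^sub>n = \<Sum>\<^sub>k c\<^sub>n(k) H\<^sub>k(x)\<close>
  (\<open>hsum\<close>, \<open>hsum_frac\<close>, \<open>hsum_Hx\<close>).  The term \<open>c\<^sub>n(k)\<close> is
  hypergeometric in both \<open>n\<close> and \<open>k\<close>, so creative telescoping applies: for every \<open>g\<close>, a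
  fixed first-order operator in \<open>k\<close> applied to \<open>g\<close> and summed against \<open>c\<^sub>n(k)\<close> telescopes
  to zero, and summed against \<open>c\<^sub>n(k) H\<^sub>k(x)\<close> (by Abel summation) leaves a sum with an extra
  factor \<open>1/(x+k)\<close>.  Suitable choices of \<open>g\<close> give first-order recurrences in \<open>n\<close> for
  \<open>s\<^sub>n\<close>, \<open>W\<^sub>n\<close> and \<open>S\<^sub>n\<close>.  The first two are solved in closed form, and the third shows
  that the defect \<open>2n S\<^sub>n - n s\<^sub>n (H\<^sub>n(x) + H\<^sub>n - 2H\<^sub>2\<^sub>n) - W\<^sub>n\<close> satisfies a homogeneous
  recurrence, hence vanishes since it vanishes at \<open>n = 1\<close>.  This proves the identity when
  \<open>2x\<close> is not an integer; both sides are continuous in \<open>x\<close> wherever the denominators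
  do not vanish, which gives the remaining cases.
\<close>

section \<open>Nonvanishing away from the half-integers\<close>

lemma add_Ints_neq_0:
  assumes "(a::'a::ring_1) \<notin> \<int>" and "b \<in> \<int>"
  shows "a + b \<noteq> 0"
proof
  assume "a + b = 0"
  then have "a = - b"
    by (simp add: eq_neg_iff_add_eq_0)
  with assms show False
    by simp
qed

lemma not_Ints_if_double_not_Ints: "2 * (x::'a::ring_1) \<notin> \<int> \<Longrightarrow> x \<notin> \<int>"
  by (metis Ints_add mult_2)

lemma add_of_nat_neq_0_if_double_not_Ints: "2 * x \<notin> \<int> \<Longrightarrow> x + of_nat k \<noteq> (0::'a::ring_1)"
  by (rule add_Ints_neq_0[OF not_Ints_if_double_not_Ints]) simp_all

lemma of_nat_add_1_neq_0 [simp]: "of_nat n + 1 \<noteq> (0::'a::semiring_char_0)"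
  by (metis of_nat_Suc of_nat_neq_0 add.commute)

lemma pochhammer_neq_0_if_not_Ints: "(a::'a::field_char_0) \<notin> \<int> \<Longrightarrow> pochhammer a k \<noteq> 0"
  by (metis Ints_minus Ints_of_nat pochhammer_eq_0_iff)

lemma gbinomial_neq_0_if_not_Ints:
  assumes "(a::'a::field_char_0) \<notin> \<int>"
  shows "a gchoose k \<noteq> 0"
proof -
  have "a - of_nat k + 1 \<notin> \<int>"
    using assms by simp
  then show ?thesis
    unfolding gbinomial_pochhammer' by (simp add: pochhammer_neq_0_if_not_Ints)
qed

lemma gbinomial_Suc_absorption:
  fixes a :: "'a::field_char_0"
  shows "of_nat (Suc k) * ((a + 1) gchoose Suc k) = (a + 1) * (a gchoose k)"
  using gbinomial_absorption[of k "a + 1"] by simp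

lemma gbinomial_Suc_add_2:
  fixes z :: "'a::field_char_0"
  shows "of_nat (Suc k) * (z + 1 - of_nat k) * ((z + 2) gchoose Suc k) = (z + 1) * (z + 2) * (z gchoose k)"
proof -
  have "of_nat (Suc k) * (z + 1 - of_nat k) * ((z + 2) gchoose Suc k)
      = (z + 1 - of_nat k) * (of_nat (Suc k) * ((z + 1 + 1) gchoose Suc k))"
    by (simp add: add.assoc mult_ac)
  also have "\<dots> = (z + 2) * ((z + 1 - of_nat k) * ((z + 1) gchoose k))"
    by (simp only: gbinomial_Suc_absorption) (simp add: add.assoc mult_ac)
  also have "(z + 1 - of_nat k) * ((z + 1) gchoose k) = (z + 1) * (z gchoose k)"
    using gbinomial_absorb_comp[of "z + 1" k] by simp
  finally show ?thesis
    by (simp only: mult_ac)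
qed

lemma sum_mult_diff_mult:
  fixes c r :: "'a \<Rightarrow> 'b::comm_ring"
  shows "(\<Sum>k\<in>A. c k * (a - b * r k)) = a * sum c A - b * (\<Sum>k\<in>A. c k * r k)"
  by (simp add: sum_subtractf sum_distrib_left algebra_simps)

definition hterm :: "complex \<Rightarrow> nat \<Rightarrow> nat \<Rightarrow> complex" where
  "hterm x n k = (-1)^k * of_nat (n choose k) * pochhammer (2*x + 1) k / pochhammer (2*x + of_nat n + 1) k"

lemma hterm_eq_gbinomial:
  "hterm x n k = (-1)^k * of_nat (n choose k) * ((2*x + of_nat k) gchoose k) / ((2*x + of_nat n + of_nat k) gchoose k)"
proof -
  have "(2*x + of_nat k) gchoose k = pochhammer (2*x + 1) k / fact k"
    "(2*x + of_nat n + of_nat k) gchoose k = pochhammer (2*x + of_nat n + 1) k / fact k"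
    by (simp_all add: gbinomial_pochhammer')
  then show ?thesis
    by (simp add: hterm_def)
qed

lemma hterm_eq_0: "n < k \<Longrightarrow> hterm x n k = 0"
  by (simp add: hterm_def)

lemma hterm_Suc_right:
  assumes "2*x \<notin> \<int>"
  shows "hterm x n (Suc k) * (of_nat (Suc k) * (2*x + of_nat n + 1 + of_nat k))
       = - hterm x n k * ((of_nat n - of_nat k) * (2*x + 1 + of_nat k))"
proof (cases "k < n")
  case True
  define a where "a = 2*x + 1 + of_nat k"
  define b where "b = 2*x + of_nat n + 1 + of_nat k"
  define d where "d = of_nat n - (of_nat k :: complex)"
  define s where "s = (of_nat (Suc k) :: complex)"
  have "Suc k * (n choose Suc k) = (n - k) * (n choose k)"
    by (simp only: binomial_absorption binomial_absorb_comp)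
  then have "of_nat (Suc k) * of_nat (n choose Suc k) = (of_nat (n - k) * of_nat (n choose k) :: complex)"
    by (simp only: of_nat_mult[symmetric])
  moreover have "of_nat (n - k) = d"
    using True by (simp add: d_def of_nat_diff)
  ultimately have "s * of_nat (n choose Suc k) = d * of_nat (n choose k)"
    by (simp add: s_def)
  moreover have "pochhammer (2*x + of_nat n + 1) k \<noteq> 0" "b \<noteq> 0"
    using assms by (simp_all add: b_def add.assoc add_Ints_neq_0 pochhammer_neq_0_if_not_Ints)
  ultimately show ?thesis
    unfolding hterm_def pochhammer_Suc a_def[symmetric] b_def[symmetric] d_def[symmetric] s_def[symmetric]
    by (simp add: field_simps)
next
  case False
  then show ?thesis
    by (cases "k = n") (simp_all add: hterm_eq_0)
qed

lemma hterm_Suc_left: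
  assumes "2*x \<notin> \<int>"
  shows "hterm x n k * ((of_nat n + 1) * (2*x + of_nat n + 1))
       = hterm x (Suc n) k * ((of_nat n + 1 - of_nat k) * (2*x + of_nat n + 1 + of_nat k))"
proof (cases "k \<le> n")
  case True
  define b where "b = 2*x + of_nat n + 1"
  define e where "e = 2*x + of_nat n + 1 + of_nat k"
  define d where "d = of_nat n + 1 - (of_nat k :: complex)"
  define s where "s = (of_nat n + 1 :: complex)"
  define P where "P = (-1)^k * pochhammer (2*x + 1) k"
  have "(Suc n - k) * (Suc n choose k) = Suc n * (n choose k)"
    using binomial_absorb_comp[of "Suc n" k] by simp
  then have "of_nat (Suc n - k) * of_nat (Suc n choose k) = (of_nat (Suc n) * of_nat (n choose k) :: complex)"
    by (simp only: of_nat_mult[symmetric])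
  moreover have "of_nat (Suc n - k) = d" "of_nat (Suc n) = s"
    using True by (simp_all add: d_def s_def of_nat_diff)
  ultimately have binom: "d * of_nat (Suc n choose k) = s * of_nat (n choose k)"
    by simp
  have "pochhammer b k * (b + of_nat k) = b * pochhammer (b + 1) k"
    by (metis pochhammer_Suc pochhammer_rec)
  moreover have "b + of_nat k = e" "b + 1 = 2*x + of_nat (Suc n) + 1"
    by (simp_all add: b_def e_def)
  ultimately have poch: "pochhammer b k * e = b * pochhammer (2*x + of_nat (Suc n) + 1) k"
    by simp
  have nz: "pochhammer b k \<noteq> 0" "pochhammer (2*x + of_nat (Suc n) + 1) k \<noteq> 0"
    using assms by (simp_all add: b_def add.assoc pochhammer_neq_0_if_not_Ints)
  have "hterm x (Suc n) k * (d * e) = P * (d * of_nat (Suc n choose k)) * e / pochhammer (2*x + of_nat (Suc n) + 1) k"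
    by (simp add: hterm_def P_def)
  also have "\<dots> = P * (s * of_nat (n choose k)) * e / pochhammer (2*x + of_nat (Suc n) + 1) k"
    by (simp only: binom)
  also have "\<dots> = P * (s * of_nat (n choose k)) * b / pochhammer b k"
    using poch nz by (simp add: field_simps)
  also have "\<dots> = hterm x n k * (s * b)"
    by (simp add: hterm_def P_def b_def)
  finally show ?thesis
    by (simp add: b_def d_def e_def s_def)
next
  case False
  then show ?thesis
    by (cases "k = Suc n") (simp_all add: hterm_eq_0)
qed

lemma sum_hterm_Suc_left:
  assumes "2*x \<notin> \<int>"
  shows "(of_nat n + 1) * (2*x + of_nat n + 1) * (\<Sum>k=0..n. hterm x n k * f k)
       = (\<Sum>k=0..Suc n. hterm x (Suc n) k * ((of_nat n + 1 - of_nat k) * (2*x + of_nat n + 1 + of_nat k)) * f k)"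
proof -
  have "(\<Sum>k=0..n. hterm x n k * f k) = (\<Sum>k=0..Suc n. hterm x n k * f k)"
    by (simp add: hterm_eq_0)
  also have "(of_nat n + 1) * (2*x + of_nat n + 1) * \<dots>
      = (\<Sum>k=0..Suc n. hterm x n k * ((of_nat n + 1) * (2*x + of_nat n + 1)) * f k)"
    by (simp only: sum_distrib_left mult_ac)
  finally show ?thesis
    by (simp only: hterm_Suc_left[OF assms])
qed

section \<open>Creative telescoping\<close>

lemma Hx_Suc: "Hx x (Suc k) = Hx x k + 1 / (x + of_nat (Suc k))"
  by (simp add: Hx_def)

lemma sum_telescope_mult_Hx:
  assumes "F 0 = 0" and "F (Suc N) = 0"
  shows "(\<Sum>k=0..N. (F (Suc k) - F k) * Hx x k) = - (\<Sum>k=0..N. F k / (x + of_nat k))"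
proof -
  have "(F (Suc k) - F k) * Hx x k
      = (F (Suc k) * Hx x (Suc k) - F k * Hx x k) - F (Suc k) / (x + of_nat (Suc k))" for k
    by (simp add: Hx_Suc algebra_simps)
  then have "(\<Sum>k=0..N. (F (Suc k) - F k) * Hx x k)
      = (\<Sum>k=0..N. F (Suc k) * Hx x (Suc k) - F k * Hx x k) - (\<Sum>k=0..N. F (Suc k) / (x + of_nat (Suc k)))"
    by (simp add: sum_subtractf)
  also have "(\<Sum>k=0..N. F (Suc k) / (x + of_nat (Suc k))) = (\<Sum>k=0..N. F k / (x + of_nat k))"
    using sum.atLeast0_atMost_Suc_shift[of "\<lambda>k. F k / (x + of_nat k)" N]
      sum.atLeast0_atMost_Suc[of "\<lambda>k. F k / (x + of_nat k)" N] assms by simp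
  also have "(\<Sum>k=0..N. F (Suc k) * Hx x (Suc k) - F k * Hx x k) = 0"
    using sum_Suc_diff[of 0 N "\<lambda>k. F k * Hx x k"] assms by simp
  finally show ?thesis
    by simp
qed

text \<open>
  The operator annihilating \<open>hterm x N\<close> in the sense of creative telescoping, and its
  certificate: \<open>hterm x N k * tele_op x N g k\<close> is the difference of consecutive values of
  \<open>tele_cert x N g\<close>, which vanishes at \<open>k = 0\<close> and \<open>k = N + 1\<close>.
\<close>

definition tele_op :: "complex \<Rightarrow> nat \<Rightarrow> (nat \<Rightarrow> complex) \<Rightarrow> nat \<Rightarrow> complex" where
  "tele_op x N g k = - (of_nat N - of_nat k) * (2*x + 1 + of_nat k) * g (Suc k)
                     - of_nat k * (2*x + of_nat N + of_nat k) * g k"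

definition tele_cert :: "complex \<Rightarrow> nat \<Rightarrow> (nat \<Rightarrow> complex) \<Rightarrow> nat \<Rightarrow> complex" where
  "tele_cert x N g k = hterm x N k * (of_nat k * (2*x + of_nat N + of_nat k) * g k)"

lemma hterm_mult_tele_op:
  assumes "2*x \<notin> \<int>"
  shows "hterm x N k * tele_op x N g k = tele_cert x N g (Suc k) - tele_cert x N g k"
proof -
  have "tele_cert x N g (Suc k)
      = hterm x N (Suc k) * (of_nat (Suc k) * (2*x + of_nat N + 1 + of_nat k)) * g (Suc k)"
    by (simp add: tele_cert_def algebra_simps)
  also have "\<dots> = - hterm x N k * ((of_nat N - of_nat k) * (2*x + 1 + of_nat k)) * g (Suc k)"
    by (simp only: hterm_Suc_right[OF assms])
  finally show ?thesis
    by (simp add: tele_op_def tele_cert_def algebra_simps)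
qed

lemma sum_hterm_tele_op:
  assumes "2*x \<notin> \<int>"
  shows "(\<Sum>k=0..N. hterm x N k * tele_op x N g k) = 0"
  by (simp only: hterm_mult_tele_op[OF assms] sum_Suc_diff[OF le0])
    (simp add: tele_cert_def hterm_eq_0)

lemma sum_hterm_tele_op_Hx:
  assumes "2*x \<notin> \<int>"
  shows "(\<Sum>k=0..N. hterm x N k * tele_op x N g k * Hx x k)
       = - (\<Sum>k=0..N. tele_cert x N g k / (x + of_nat k))"
  by (simp only: hterm_mult_tele_op[OF assms])
    (rule sum_telescope_mult_Hx; simp add: tele_cert_def hterm_eq_0)

text \<open>
  For this \<open>g\<close> the operator is affine in \<open>(N - k)(2x + N + k)\<close>, the factor that
  \<open>sum_hterm_Suc_left\<close> trades for the step from \<open>n\<close> to \<open>N = n + 1\<close>.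
\<close>

lemma sum_hterm_tele_op_step:
  fixes n :: nat
  assumes "2*x \<notin> \<int>"
  defines "m \<equiv> of_nat n :: complex"
  shows "(\<Sum>k=0..Suc n. hterm x (Suc n) k * tele_op x (Suc n) (\<lambda>k. (2*m + 1) * (1 - of_nat k) - 2*m*x) k * f k)
       = m * (m + 1) * (2*x + 2*m + 1) * (2*x + 2*m + 2) * (\<Sum>k=0..Suc n. hterm x (Suc n) k * f k)
         - 2*m * (2*m + 1) * ((m + 1) * (2*x + m + 1) * (\<Sum>k=0..n. hterm x n k * f k))"
proof -
  define D where "D = m * (m + 1) * (2*x + 2*m + 1) * (2*x + 2*m + 2)"
  define r where "r k = (m + 1 - of_nat k) * (2*x + m + 1 + of_nat k)" for k
  have "tele_op x (Suc n) (\<lambda>k. (2*m + 1) * (1 - of_nat k) - 2*m*x) k = D - 2*m * (2*m + 1) * r k" for k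
    by (simp add: tele_op_def D_def r_def m_def algebra_simps)
  then have "(\<Sum>k=0..Suc n. hterm x (Suc n) k * tele_op x (Suc n) (\<lambda>k. (2*m + 1) * (1 - of_nat k) - 2*m*x) k * f k)
      = (\<Sum>k=0..Suc n. (hterm x (Suc n) k * f k) * (D - 2*m * (2*m + 1) * r k))"
    by (simp only: mult_ac)
  also have "\<dots> = D * (\<Sum>k=0..Suc n. hterm x (Suc n) k * f k) - 2*m * (2*m + 1) * (\<Sum>k=0..Suc n. hterm x (Suc n) k * f k * r k)"
    by (rule sum_mult_diff_mult)
  also have "(\<Sum>k=0..Suc n. hterm x (Suc n) k * f k * r k) = (m + 1) * (2*x + m + 1) * (\<Sum>k=0..n. hterm x n k * f k)"
    using sum_hterm_Suc_left[OF assms(1), of n f] unfolding r_def m_def by (simp only: mult_ac)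
  finally show ?thesis
    unfolding D_def .
qed

section \<open>Recurrences in \<open>n\<close>\<close>

definition hsum :: "complex \<Rightarrow> nat \<Rightarrow> complex" where
  "hsum x n = (\<Sum>k=0..n. hterm x n k)"

definition hsum_frac :: "complex \<Rightarrow> nat \<Rightarrow> complex" where
  "hsum_frac x n = (\<Sum>k=0..n. hterm x n k * (of_nat k / (x + of_nat k)))"

definition hsum_Hx :: "complex \<Rightarrow> nat \<Rightarrow> complex" where
  "hsum_Hx x n = (\<Sum>k=0..n. hterm x n k * Hx x k)"

lemma hsum_Suc:
  assumes "2*x \<notin> \<int>" and "n \<ge> 1"
  defines "m \<equiv> of_nat n :: complex"
  shows "hsum x (Suc n) * ((2*x + 2*m + 1) * (2*x + 2*m + 2)) = 2 * (2*m + 1) * (2*x + m + 1) * hsum x n"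
proof -
  have "0 = m * (m + 1) * (2*x + 2*m + 1) * (2*x + 2*m + 2) * hsum x (Suc n)
      - 2*m * (2*m + 1) * ((m + 1) * (2*x + m + 1) * hsum x n)"
    using sum_hterm_tele_op_step[OF assms(1), of n "\<lambda>_. 1"]
    unfolding mult_1_right sum_hterm_tele_op[OF assms(1)] hsum_def m_def .
  then have "m * (m + 1) * (hsum x (Suc n) * ((2*x + 2*m + 1) * (2*x + 2*m + 2))
      - 2 * (2*m + 1) * (2*x + m + 1) * hsum x n) = 0"
    by (simp add: algebra_simps)
  moreover have "m * (m + 1) \<noteq> 0"
    using assms(2) by (simp add: m_def)
  ultimately show ?thesis
    by simp
qed

lemma hsum_frac_Suc:
  assumes "2*x \<notin> \<int>" and "n \<ge> 1"
  defines "m \<equiv> of_nat n :: complex"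
  shows "(x + m + 1)^2 * hsum_frac x (Suc n) = (m + 1) * (2*x + m + 1) * hsum_frac x n"
proof -
  define r where "r k = (m + 1 - of_nat k) * (2*x + m + 1 + of_nat k)" for k
  define c where "c k = hterm x (Suc n) k * (of_nat k / (x + of_nat k))" for k
  have xk: "x + of_nat k \<noteq> 0" for k
    using assms(1) by (rule add_of_nat_neq_0_if_double_not_Ints)
  have "hterm x (Suc n) k * tele_op x (Suc n) (\<lambda>k. 1 - of_nat k) k
      = 2*m * (hterm x (Suc n) k * (of_nat k * (x + of_nat k)))" for k
    by (simp add: tele_op_def m_def algebra_simps)
  then have "2*m * (\<Sum>k=0..Suc n. hterm x (Suc n) k * (of_nat k * (x + of_nat k))) = 0"
    using sum_hterm_tele_op[OF assms(1), of "Suc n" "\<lambda>k. 1 - of_nat k"]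
    by (simp only: sum_distrib_left)
  then have vanish: "(\<Sum>k=0..Suc n. hterm x (Suc n) k * (of_nat k * (x + of_nat k))) = 0"
    using assms(2) by (simp add: m_def)
  have "(m + 1) * (2*x + m + 1) * hsum_frac x n = (\<Sum>k=0..Suc n. c k * r k)"
    using sum_hterm_Suc_left[OF assms(1), of n "\<lambda>k. of_nat k / (x + of_nat k)"]
    unfolding hsum_frac_def c_def r_def m_def by (simp only: mult_ac)
  moreover have "hsum_frac x (Suc n) = sum c {0..Suc n}"
    unfolding hsum_frac_def c_def ..
  ultimately have "(x + m + 1)^2 * hsum_frac x (Suc n) - (m + 1) * (2*x + m + 1) * hsum_frac x n
      = (x + m + 1)^2 * sum c {0..Suc n} - 1 * (\<Sum>k=0..Suc n. c k * r k)"
    by (simp only: mult_1)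
  also have "\<dots> = (\<Sum>k=0..Suc n. c k * ((x + m + 1)^2 - 1 * r k))"
    by (rule sum_mult_diff_mult[symmetric])
  also have "\<dots> = (\<Sum>k=0..Suc n. hterm x (Suc n) k * (of_nat k * (x + of_nat k)))"
  proof (rule sum.cong[OF refl])
    fix k
    have "(x + m + 1)^2 - r k = (x + of_nat k)^2"
      by (simp add: r_def algebra_simps power2_eq_square)
    then show "c k * ((x + m + 1)^2 - 1 * r k) = hterm x (Suc n) k * (of_nat k * (x + of_nat k))"
      using xk[of k] by (simp add: c_def power2_eq_square)
  qed
  finally show ?thesis
    using vanish by simp
qed

text \<open>
  The remainder left by Abel summation in the recurrence for \<open>hsum_Hx\<close> is reduced, up to
  one more telescoping sum, to \<open>hsum\<close> and \<open>hsum_frac\<close> by partial fractions in \<open>k\<close>.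
\<close>

lemma sum_tele_cert_div:
  fixes n :: nat
  assumes "2*x \<notin> \<int>"
  defines "m \<equiv> of_nat n :: complex"
  shows "2*m * (2*m + 1) * (\<Sum>k=0..Suc n. tele_cert x (Suc n) (\<lambda>k. (2*m + 1) * (1 - of_nat k) - 2*m*x) k / (x + of_nat k))
       = 2*m^2 * (m + 1) * (2*x + 1) * (2*x + 2*m + 1) * hsum x (Suc n)
         + 2*m * (2*m + 1) * (x + m + 1) * (x + 2*m + 1) * hsum_frac x (Suc n)"
proof -
  define g where "g k = (2*m + 1) * (1 - of_nat k) - 2*m*x" for k
  define g' where "g' k = (2*m + 1)^2 * of_nat k + 2*m^2 * (2*x + 2*m + 1) - (2*m + 1)^2" for k
  define \<mu> where "\<mu> = 2*m^2 * (m + 1) * (2*x + 1) * (2*x + 2*m + 1)"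
  define \<rho> where "\<rho> = 2*m * (2*m + 1) * (x + m + 1) * (x + 2*m + 1)"
  have "2*m * (2*m + 1) * (tele_cert x (Suc n) g k / (x + of_nat k))
      = \<mu> * hterm x (Suc n) k + hterm x (Suc n) k * tele_op x (Suc n) g' k
        + \<rho> * (hterm x (Suc n) k * (of_nat k / (x + of_nat k)))" for k
  proof -
    have "2*m * (2*m + 1) * (tele_cert x (Suc n) g k / (x + of_nat k))
        = hterm x (Suc n) k * (2*m * (2*m + 1) * (of_nat k * (2*x + of_nat (Suc n) + of_nat k) * g k)) / (x + of_nat k)"
      unfolding tele_cert_def by (simp only: times_divide_eq_right mult_ac)
    also have "2*m * (2*m + 1) * (of_nat k * (2*x + of_nat (Suc n) + of_nat k) * g k)
        = (x + of_nat k) * (\<mu> + tele_op x (Suc n) g' k) + \<rho> * of_nat k"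
      by (simp add: tele_op_def g_def g'_def \<mu>_def \<rho>_def m_def algebra_simps power2_eq_square)
    also have "x + of_nat k \<noteq> 0"
      using assms(1) by (rule add_of_nat_neq_0_if_double_not_Ints)
    then have "hterm x (Suc n) k * ((x + of_nat k) * (\<mu> + tele_op x (Suc n) g' k) + \<rho> * of_nat k) / (x + of_nat k)
        = \<mu> * hterm x (Suc n) k + hterm x (Suc n) k * tele_op x (Suc n) g' k
          + \<rho> * (hterm x (Suc n) k * (of_nat k / (x + of_nat k)))"
      by (simp add: field_simps)
    finally show ?thesis .
  qed
  then show ?thesis
    unfolding g_def[symmetric] \<mu>_def[symmetric] \<rho>_def[symmetric] hsum_def hsum_frac_def
    by (simp only: sum_distrib_left sum.distrib sum_hterm_tele_op[OF assms(1)] add_0_right)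
qed

lemma hsum_Hx_Suc:
  assumes "2*x \<notin> \<int>" and "n \<ge> 1"
  defines "m \<equiv> of_nat n :: complex"
  shows "m * (2*m + 1) * ((m + 1) * (2*x + 2*m + 1) * (2*x + 2*m + 2) * hsum_Hx x (Suc n)
           - 2 * (2*m + 1) * (m + 1) * (2*x + m + 1) * hsum_Hx x n)
       = - m * (m + 1) * (2*x + 1) * (2*x + 2*m + 1) * hsum x (Suc n)
         - (2*m + 1) * (x + m + 1) * (x + 2*m + 1) * hsum_frac x (Suc n)"
proof -
  define g where "g k = (2*m + 1) * (1 - of_nat k) - 2*m*x" for k
  define T where "T = (\<Sum>k=0..Suc n. tele_cert x (Suc n) g k / (x + of_nat k))"
  define L where "L = m * (m + 1) * (2*x + 2*m + 1) * (2*x + 2*m + 2) * hsum_Hx x (Suc n)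
      - 2*m * (2*m + 1) * ((m + 1) * (2*x + m + 1) * hsum_Hx x n)"
  define R where "R = 2*m^2 * (m + 1) * (2*x + 1) * (2*x + 2*m + 1) * hsum x (Suc n)
      + 2*m * (2*m + 1) * (x + m + 1) * (x + 2*m + 1) * hsum_frac x (Suc n)"
  have TL: "- T = L"
    using sum_hterm_tele_op_step[OF assms(1), of n "Hx x"]
    unfolding T_def L_def g_def sum_hterm_tele_op_Hx[OF assms(1), symmetric] hsum_Hx_def m_def .
  have TR: "2*m * (2*m + 1) * T = R"
    using sum_tele_cert_div[OF assms(1), of n] unfolding T_def R_def g_def m_def .
  have "2*m * (m * (2*m + 1) * ((m + 1) * (2*x + 2*m + 1) * (2*x + 2*m + 2) * hsum_Hx x (Suc n)
           - 2 * (2*m + 1) * (m + 1) * (2*x + m + 1) * hsum_Hx x n)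
         - (- m * (m + 1) * (2*x + 1) * (2*x + 2*m + 1) * hsum x (Suc n)
         - (2*m + 1) * (x + m + 1) * (x + 2*m + 1) * hsum_frac x (Suc n)))
      = 2*m * (2*m + 1) * L + R"
    by (simp add: L_def R_def algebra_simps power2_eq_square)
  also have "\<dots> = 0"
    by (simp add: TL[symmetric] TR[symmetric])
  finally show ?thesis
    using assms(2) by (simp add: m_def)
qed

section \<open>Closed forms\<close>

lemma hsum_closed_form:
  assumes "2*x \<notin> \<int>" and "n \<ge> 1"
  shows "hsum x n = 2 * 4^(n-1) * ((of_nat n - 1/2) gchoose n) / ((2*x + 2 * of_nat n) gchoose n)"
  using assms(2)
proof (induction n rule: nat_induct_at_least)
  case base
  have "2*x + 2 \<noteq> 0"
    using add_Ints_neq_0[OF assms(1), of 2] by simp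
  then show ?case
    by (simp add: hsum_def hterm_def field_simps)
next
  case (Suc n)
  define m :: complex where "m = of_nat n"
  define G1 where "G1 = (m - 1/2) gchoose n"
  define G2 where "G2 = (2*x + 2*m) gchoose n"
  define F :: complex where "F = 4^(n-1)"
  define a b c p where "a = 2*x + m + 1" and "b = 2*x + 2*m + 1" and "c = 2*x + 2*m + 2" and "p = m + 1"
  have nz: "p \<noteq> 0" "G2 \<noteq> 0" "a \<noteq> 0" "b \<noteq> 0" "c \<noteq> 0"
    using assms(1) unfolding G2_def m_def a_def b_def c_def p_def
    by (simp_all add: gbinomial_neq_0_if_not_Ints add_Ints_neq_0 add.assoc)
  have "((of_nat (Suc n) - 1/2) gchoose Suc n) * p = (m + 1/2) * G1"
    using gbinomial_Suc_absorption[of n "m - 1/2"] by (simp add: G1_def m_def p_def algebra_simps)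
  then have G1': "(of_nat (Suc n) - 1/2) gchoose Suc n = (m + 1/2) * G1 / p"
    using nz(1) by (rule eq_divide_imp[rotated])
  have "((2*x + 2 * of_nat (Suc n)) gchoose Suc n) * (p * a) = b * c * G2"
    using gbinomial_Suc_add_2[of n "2*x + 2*m"] by (simp add: G2_def m_def a_def b_def c_def p_def algebra_simps)
  then have G2': "(2*x + 2 * of_nat (Suc n)) gchoose Suc n = b * c * G2 / (p * a)"
    using nz by (intro eq_divide_imp) simp_all
  have F': "(4::complex)^(Suc n - 1) = 4 * F"
    using Suc.hyps by (simp add: F_def power_eq_if)
  have "hsum x (Suc n) * (b * c) = 2 * (2*m + 1) * a * (2 * F * G1 / G2)"
    using hsum_Suc[OF assms(1) Suc.hyps] unfolding Suc.IH m_def F_def G1_def G2_def a_def b_def c_def .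
  then have s': "hsum x (Suc n) = 2 * (2*m + 1) * a * (2 * F * G1 / G2) / (b * c)"
    using nz by (intro eq_divide_imp) simp_all
  show ?case
    unfolding s' F' G1' G2' using nz by (simp add: field_simps)
qed

lemma hsum_frac_closed_form:
  assumes "2*x \<notin> \<int>" and "n \<ge> 1"
  shows "hsum_frac x n = - 2 * 4^(n-1) * ((x + of_nat n - 1/2) gchoose n)
           / (((2*x + 2 * of_nat n) gchoose n) * ((x + of_nat n) gchoose n))"
  using assms(2)
proof (induction n rule: nat_induct_at_least)
  case base
  define y where "y = x + 1"
  have "y \<noteq> 0"
    using add_of_nat_neq_0_if_double_not_Ints[OF assms(1), of 1] by (simp add: y_def)
  moreover have "(x + of_nat 1 - 1/2) gchoose 1 = y - 1/2" "(2*x + 2 * of_nat 1) gchoose 1 = 2 * y"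
    "(x + of_nat 1) gchoose 1 = y"
    by (simp_all add: y_def algebra_simps)
  ultimately have "- 2 * 4^(1-1) * ((x + of_nat 1 - 1/2) gchoose 1)
      / (((2*x + 2 * of_nat 1) gchoose 1) * ((x + of_nat 1) gchoose 1)) = - (2*y - 1) / (2 * y * y)"
    by (simp add: field_simps)
  moreover have "hsum_frac x 1 = - (2*y - 1) / (2 * y * y)"
    by (simp add: hsum_frac_def hterm_def y_def algebra_simps)
  ultimately show ?case
    by simp
next
  case (Suc n)
  define m :: complex where "m = of_nat n"
  define G2 where "G2 = (2*x + 2*m) gchoose n"
  define G3 where "G3 = (x + m - 1/2) gchoose n"
  define G4 where "G4 = (x + m) gchoose n"
  define F :: complex where "F = 4^(n-1)"
  define a b d p where "a = 2*x + m + 1" and "b = 2*x + 2*m + 1" and "d = x + m + 1" and "p = m + 1"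
  have nz: "p \<noteq> 0" "G2 \<noteq> 0" "G4 \<noteq> 0" "a \<noteq> 0" "b \<noteq> 0" "d \<noteq> 0"
    using assms(1) not_Ints_if_double_not_Ints[OF assms(1)]
    unfolding G2_def G4_def m_def a_def b_def d_def p_def
    by (simp_all add: gbinomial_neq_0_if_not_Ints add_Ints_neq_0 add.assoc)
  have "((2*x + 2 * of_nat (Suc n)) gchoose Suc n) * (p * a) = b * (2 * d) * G2"
    using gbinomial_Suc_add_2[of n "2*x + 2*m"] by (simp add: G2_def m_def a_def b_def d_def p_def algebra_simps)
  then have G2': "(2*x + 2 * of_nat (Suc n)) gchoose Suc n = b * (2 * d) * G2 / (p * a)"
    using nz by (intro eq_divide_imp) simp_all
  have "((x + of_nat (Suc n) - 1/2) gchoose Suc n) * p = (x + m + 1/2) * G3"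
    using gbinomial_Suc_absorption[of n "x + m - 1/2"] by (simp add: G3_def m_def p_def algebra_simps)
  then have "((x + of_nat (Suc n) - 1/2) gchoose Suc n) * (2 * p) = (2 * (x + m + 1/2)) * G3"
    by (simp only: mult.left_commute[of 2] mult.assoc) simp
  also have "2 * (x + m + 1/2) = b"
    by (simp add: b_def algebra_simps)
  finally have G3': "(x + of_nat (Suc n) - 1/2) gchoose Suc n = b * G3 / (2 * p)"
    using nz by (intro eq_divide_imp) simp_all
  have "((x + of_nat (Suc n)) gchoose Suc n) * p = d * G4"
    using gbinomial_Suc_absorption[of n "x + m"] by (simp add: G4_def m_def d_def p_def algebra_simps)
  then have G4': "(x + of_nat (Suc n)) gchoose Suc n = d * G4 / p"
    using nz by (intro eq_divide_imp) simp_all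
  have F': "(4::complex)^(Suc n - 1) = 4 * F"
    using Suc.hyps by (simp add: F_def power_eq_if)
  have "hsum_frac x (Suc n) * d^2 = p * a * (- 2 * F * G3 / (G2 * G4))"
    using hsum_frac_Suc[OF assms(1) Suc.hyps] Suc.IH
    unfolding m_def F_def G2_def G3_def G4_def a_def d_def p_def by (simp add: mult.commute)
  then have W': "hsum_frac x (Suc n) = p * a * (- 2 * F * G3 / (G2 * G4)) / d^2"
    using nz by (intro eq_divide_imp) simp_all
  show ?case
    unfolding W' F' G2' G3' G4' using nz by (simp add: field_simps power2_eq_square)
qed

section \<open>Vanishing of the defect\<close>

definition Hx_comb :: "complex \<Rightarrow> nat \<Rightarrow> complex" where
  "Hx_comb x n = Hx x n + Hx 0 n - 2 * Hx 0 (2*n)"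

lemma Hx_comb_Suc:
  assumes "x + of_nat n + 1 \<noteq> 0"
  shows "(2 * of_nat n + 1) * (x + of_nat n + 1) * (Hx_comb x (Suc n) - Hx_comb x n) = - (2*x + 1)"
proof -
  have half: "(2::complex) / (2 * (of_nat n + 1)) = 1 / (of_nat n + 1)"
    using mult_divide_mult_cancel_left[of "2::complex" 1 "of_nat n + 1"] by simp
  have "2 * Suc n = Suc (Suc (2*n))"
    by simp
  then have "Hx_comb x (Suc n) - Hx_comb x n
      = 1 / (x + of_nat n + 1) + 1 / (of_nat n + 1) - 2 / (2 * of_nat n + 1) - 2 / (2 * (of_nat n + 1))"
    unfolding Hx_comb_def by (simp only: Hx_Suc) (simp add: algebra_simps)
  then have "Hx_comb x (Suc n) - Hx_comb x n = 1 / (x + of_nat n + 1) - 2 / (2 * of_nat n + 1)"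
    unfolding half by simp
  then show ?thesis
    using assms of_nat_add_1_neq_0[of "2*n", where 'a=complex] by (simp add: field_simps)
qed

definition hdefect :: "complex \<Rightarrow> nat \<Rightarrow> complex" where
  "hdefect x n = 2 * of_nat n * hsum_Hx x n - of_nat n * hsum x n * Hx_comb x n - hsum_frac x n"

lemma hdefect_1:
  assumes "2*x \<notin> \<int>"
  shows "hdefect x 1 = 0"
proof -
  define c where "c = hterm x 1 1"
  have "hsum x 1 = 1 + c" "hsum_Hx x 1 = c / (x + 1)" "hsum_frac x 1 = c / (x + 1)"
    by (simp_all add: c_def hsum_def hsum_Hx_def hsum_frac_def Hx_def hterm_def)
  moreover have "Hx_comb x 1 = 1 / (x + 1) - 2"
    by (simp add: Hx_comb_def Hx_def numeral_2_eq_2)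
  ultimately have "hdefect x 1 = 2 * (c / (x + 1)) - (1 + c) * (1 / (x + 1) - 2) - c / (x + 1)"
    unfolding hdefect_def by (simp only: of_nat_1 mult_1 mult_1_right)
  also have "\<dots> = 0"
  proof -
    define y where "y = x + 1"
    have "y \<noteq> 0"
      using add_of_nat_neq_0_if_double_not_Ints[OF assms, of 1] by (simp add: y_def)
    moreover have "c = - (2*y - 1) / (2*y)"
      by (simp add: c_def hterm_def y_def algebra_simps)
    ultimately show ?thesis
      unfolding y_def[symmetric] by (simp add: field_simps)
  qed
  finally show ?thesis .
qed

lemma hdefect_Suc:
  assumes "2*x \<notin> \<int>" and "n \<ge> 1"
  defines "m \<equiv> of_nat n :: complex"
  shows "m * (2*m + 1) * (2*x + 2*m + 1) * (x + m + 1) * hdefect x (Suc n)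
       = (2*m + 1)^2 * (m + 1) * (2*x + m + 1) * hdefect x n"
proof -
  define S' S s' s W' W A' A where "S' = hsum_Hx x (Suc n)" and "S = hsum_Hx x n"
    and "s' = hsum x (Suc n)" and "s = hsum x n" and "W' = hsum_frac x (Suc n)" and "W = hsum_frac x n"
    and "A' = Hx_comb x (Suc n)" and "A = Hx_comb x n"
  note defs = S'_def S_def s'_def s_def W'_def W_def A'_def A_def
  have rec_S: "m * (2*m + 1) * ((m + 1) * (2*x + 2*m + 1) * (2*x + 2*m + 2) * S' - 2 * (2*m + 1) * (m + 1) * (2*x + m + 1) * S)
      = - m * (m + 1) * (2*x + 1) * (2*x + 2*m + 1) * s' - (2*m + 1) * (x + m + 1) * (x + 2*m + 1) * W'"
    using hsum_Hx_Suc[OF assms(1,2)] unfolding defs m_def .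
  have rec_s: "s' * ((2*x + 2*m + 1) * (2*x + 2*m + 2)) = 2 * (2*m + 1) * (2*x + m + 1) * s"
    using hsum_Suc[OF assms(1,2)] unfolding defs m_def .
  have rec_W: "(x + m + 1)^2 * W' = (m + 1) * (2*x + m + 1) * W"
    using hsum_frac_Suc[OF assms(1,2)] unfolding defs m_def .
  have "x + of_nat n + 1 \<noteq> 0"
    using add_of_nat_neq_0_if_double_not_Ints[OF assms(1), of "Suc n"] by (simp add: ac_simps)
  then have rec_A: "(2*m + 1) * (x + m + 1) * (A' - A) = - (2*x + 1)"
    unfolding defs m_def by (rule Hx_comb_Suc)
  txt \<open>The \<open>S\<close>-terms cancel by \<open>rec_S\<close>, the \<open>W\<close>-terms by \<open>rec_W\<close>, and the \<open>s\<close>-terms by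
    \<open>rec_s\<close> together with \<open>rec_A\<close>.\<close>
  have "2 * (m * (2*m + 1) * (2*x + 2*m + 1) * (x + m + 1) * (2 * (m + 1) * S' - (m + 1) * s' * A' - W')
          - (2*m + 1)^2 * (m + 1) * (2*x + m + 1) * (2 * m * S - m * s * A - W))
      = 2 * (m * (2*m + 1) * ((m + 1) * (2*x + 2*m + 1) * (2*x + 2*m + 2) * S' - 2 * (2*m + 1) * (m + 1) * (2*x + m + 1) * S)
             - (- m * (m + 1) * (2*x + 1) * (2*x + 2*m + 1) * s' - (2*m + 1) * (x + m + 1) * (x + 2*m + 1) * W'))
        - m * (2*m + 1) * (m + 1) * A * (s' * ((2*x + 2*m + 1) * (2*x + 2*m + 2)) - 2 * (2*m + 1) * (2*x + m + 1) * s)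
        - 2 * (2*m + 1)^2 * ((x + m + 1)^2 * W' - (m + 1) * (2*x + m + 1) * W)
        - 2 * m * (m + 1) * (2*x + 2*m + 1) * s' * ((2*m + 1) * (x + m + 1) * (A' - A) + (2*x + 1))"
    by (simp add: algebra_simps power2_eq_square)
  also have "\<dots> = 0"
    using rec_S rec_s rec_W rec_A by simp
  finally show ?thesis
    unfolding hdefect_def defs m_def by (simp add: ac_simps)
qed

lemma hdefect_eq_0:
  assumes "2*x \<notin> \<int>" and "n \<ge> 1"
  shows "hdefect x n = 0"
  using assms(2)
proof (induction n rule: nat_induct_at_least)
  case base
  show ?case
    using assms(1) by (rule hdefect_1)
next
  case (Suc n)
  define m :: complex where "m = of_nat n"
  have "m * (2*m + 1) * (2*x + 2*m + 1) * (x + m + 1) * hdefect x (Suc n) = 0"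
    using hdefect_Suc[OF assms(1) Suc.hyps] Suc.IH unfolding m_def by simp
  moreover have "m * (2*m + 1) * (2*x + 2*m + 1) * (x + m + 1) \<noteq> 0"
    using Suc.hyps add_Ints_neq_0[OF assms(1), of "2*m + 1"]
      add_of_nat_neq_0_if_double_not_Ints[OF assms(1), of "Suc n"] of_nat_add_1_neq_0[of "2*n", where 'a=complex]
    by (simp add: m_def ac_simps)
  ultimately show ?case
    by simp
qed

lemma theorem3_if_double_not_Ints:
  fixes n :: nat and x :: complex
  assumes "n \<ge> 1" and "2*x \<notin> \<int>"
  shows "(\<Sum>k=0..n. (-1)^k * of_nat (n choose k)
            * ((2*x + of_nat k) gchoose k) / ((2*x + of_nat n + of_nat k) gchoose k) * Hx x k)
       = 4^(n-1) * ((of_nat n - 1/2) gchoose n) / ((2*x + 2 * of_nat n) gchoose n)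
            * (Hx x n + Hx 0 n - 2 * Hx 0 (2*n))
         - 4^(n-1) / of_nat n * ((x + of_nat n - 1/2) gchoose n)
            / (((2*x + 2 * of_nat n) gchoose n) * ((x + of_nat n) gchoose n))"
proof -
  have "of_nat n \<noteq> (0::complex)"
    using assms(1) by simp
  then have "hsum_Hx x n = hsum x n / 2 * Hx_comb x n + hsum_frac x n / (2 * of_nat n)"
    using hdefect_eq_0[OF assms(2,1)] by (simp add: hdefect_def field_simps)
  then show ?thesis
    unfolding hsum_Hx_def hterm_eq_gbinomial[symmetric] hsum_closed_form[OF assms(2,1)]
      hsum_frac_closed_form[OF assms(2,1)] Hx_comb_def
    by simp
qed

lemma isCont_gbinomial [continuous_intros]:
  fixes g :: "'a::t2_space \<Rightarrow> 'b::real_normed_field"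
  assumes "isCont g x"
  shows "isCont (\<lambda>z. g z gchoose k) x"
  unfolding gbinomial_prod_rev using assms by (intro continuous_intros) auto

lemma eq_if_isCont_and_eq_off_half_Ints:
  fixes f g :: "complex \<Rightarrow> complex"
  assumes "isCont f x" and "isCont g x" and "\<And>z. 2*z \<notin> \<int> \<Longrightarrow> f z = g z"
  shows "f x = g x"
proof (cases "2*x \<in> \<int>")
  case True
  define zs where "zs j = x + \<i> * of_real (1 / real (Suc j))" for j
  have "Im x = 0"
    using True by (auto elim!: Ints_cases simp: complex_eq_iff)
  then have "2 * zs j \<notin> \<int>" for j
    by (auto elim!: Ints_cases simp: zs_def complex_eq_iff)
  then have eq: "f (zs j) = g (zs j)" for j
    using assms(3) by blast
  have "zs \<longlonglongrightarrow> x + \<i> * of_real 0"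
    unfolding zs_def by (intro tendsto_intros LIMSEQ_Suc[OF lim_inverse_n'])
  then have lim: "zs \<longlonglongrightarrow> x"
    by simp
  have "(\<lambda>j. f (zs j)) \<longlonglongrightarrow> f x"
    using isCont_tendsto_compose[OF assms(1) lim] .
  moreover have "(\<lambda>j. f (zs j)) \<longlonglongrightarrow> g x"
    using isCont_tendsto_compose[OF assms(2) lim] by (simp add: eq)
  ultimately show ?thesis
    by (rule LIMSEQ_unique)
next
  case False
  then show ?thesis
    by (rule assms(3))
qed

theorem theorem3:
  fixes n :: nat and x :: complex
  assumes "n \<ge> 1"
    and "\<And>j. 1 \<le> j \<Longrightarrow> j \<le> n \<Longrightarrow> x + of_nat j \<noteq> 0"
    and "\<And>k. k \<le> n \<Longrightarrow> (2*x + of_nat n + of_nat k) gchoose k \<noteq> 0"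
    and "(2*x + 2 * of_nat n) gchoose n \<noteq> 0"
    and "(x + of_nat n) gchoose n \<noteq> 0"
  shows "(\<Sum>k=0..n. (-1)^k * of_nat (n choose k)
            * ((2*x + of_nat k) gchoose k) / ((2*x + of_nat n + of_nat k) gchoose k) * Hx x k)
       = 4^(n-1) * ((of_nat n - 1/2) gchoose n) / ((2*x + 2 * of_nat n) gchoose n)
            * (Hx x n + Hx 0 n - 2 * Hx 0 (2*n))
         - 4^(n-1) / of_nat n * ((x + of_nat n - 1/2) gchoose n)
            / (((2*x + 2 * of_nat n) gchoose n) * ((x + of_nat n) gchoose n))"
  apply (rule eq_if_isCont_and_eq_off_half_Ints[where x = x])
  subgoal
    unfolding Hx_def using assms(2,3) by (intro continuous_intros) auto
  subgoal
    unfolding Hx_def using assms(2,4,5) by (intro continuous_intros) auto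
  subgoal
    using assms(1) by (rule theorem3_if_double_not_Ints)
  done

end
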